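(* Let $\mathcal{G}=(V,L)$ be a finite connected undirected graph with monitor set $M\subseteq V$ and non-monitor set $N=V\setminus M$, $\sigma=|N|$, and let the measurement paths $P$ be given by Controllable Arbitrary-path Probing (CAP). Let $S\subseteq N$ be nonempty and let $k$ be an integer with $1\le k\le\sigma$. Then $S$ is $k$-identifiable if and only if $\Gamma_{\mathcal{G}^*}(S,m')\ge k$.
   Context: Failure model: a failure set is any $F\subseteq N$ (monitors never fail). A measurement path fails iff it traverses at least one node of $F$. For a set of measurement paths $P$ and $F\subseteq N$, $P_F$ denotes the set of paths in $P$ traversing at least one node of $F$. Two failure sets $F_1,F_2$ are distinguishable iff $P_{F_1}\neq P_{F_2}$. A set $S\subseteq N$ is $k$-identifiable if any two failure sets $F_1,F_2\subseteq N$ with $|F_1|\le k$, $|F_2|\le k$ and $F_1\cap S\neq F_2\cap S$ are distinguishable. Under CAP, $P$ consists of all walks in $\mathcal{G}$ (paths or cycles, repeated nodes and links allowed) that start and end at monitors (possibly the same monitor). $\mathcal{N}(M)$ denotes the set of non-monitors adjacent to at least one monitor. The auxiliary graph $\mathcal{G}^*$ is obtained from $\mathcal{G}$ by deleting all monitors (and their incident links), adding a new virtual node $m'$, and adding a link between $m'$ and every node of $\mathcal{N}(M)$. For nodes $s,t$ of a graph $\mathcal{H}$, the $(s,t)$-vertex-cut $C_{\mathcal{H}}(s,t)$ is a minimum-cardinality set of nodes (other than $s,t$) whose deletion destroys all paths from $s$ to $t$; if $s$ and $t$ are adjacent, $C_{\mathcal{H}}(s,t):=V(\mathcal{H})\setminus\{t\}$.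 For a node set $S$ and a node $m\notin S$, $\Gamma_{\mathcal{H}}(S,m):=\min_{w\in S}|C_{\mathcal{H}}(w,m)|$. *)

theory Defs
  imports Main
begin

definition is_walk :: "'a set \<Rightarrow> ('a \<Rightarrow> 'a \<Rightarrow> bool) \<Rightarrow> 'a list \<Rightarrow> bool" where
  "is_walk V E p \<longleftrightarrow> p \<noteq> [] \<and> set p \<subseteq> V \<and> (\<forall>i < length p - 1. E (p ! i) (p ! Suc i))"

definition reachable :: "'a set \<Rightarrow> ('a \<Rightarrow> 'a \<Rightarrow> bool) \<Rightarrow> 'a \<Rightarrow> 'a \<Rightarrow> bool" where
  "reachable V E s t \<longleftrightarrow> (\<exists>p. is_walk V E p \<and> hd p = s \<and> last p = t)"

definition undirected_graph :: "'a set \<Rightarrow> ('a \<Rightarrow> 'a \<Rightarrow> bool) \<Rightarrow> bool" where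
  "undirected_graph V E \<longleftrightarrow> finite V \<and> (\<forall>x y. E x y \<longrightarrow> x \<in> V \<and> y \<in> V)
     \<and> (\<forall>x y. E x y \<longrightarrow> E y x) \<and> (\<forall>x. \<not> E x x)"

definition connected_graph :: "'a set \<Rightarrow> ('a \<Rightarrow> 'a \<Rightarrow> bool) \<Rightarrow> bool" where
  "connected_graph V E \<longleftrightarrow> V \<noteq> {} \<and> (\<forall>u\<in>V. \<forall>v\<in>V. reachable V E u v)"

definition CAP_paths :: "'a set \<Rightarrow> ('a \<Rightarrow> 'a \<Rightarrow> bool) \<Rightarrow> 'a set \<Rightarrow> 'a list set" where
  "CAP_paths V E M = {p. is_walk V E p \<and> hd p \<in> M \<and> last p \<in> M}"

definition failed_paths :: "'a list set \<Rightarrow> 'a set \<Rightarrow> 'a list set" where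
  "failed_paths P F = {p \<in> P. set p \<inter> F \<noteq> {}}"

definition distinguishable :: "'a list set \<Rightarrow> 'a set \<Rightarrow> 'a set \<Rightarrow> bool" where
  "distinguishable P F1 F2 \<longleftrightarrow> failed_paths P F1 \<noteq> failed_paths P F2"

definition k_identifiable :: "'a list set \<Rightarrow> 'a set \<Rightarrow> 'a set \<Rightarrow> nat \<Rightarrow> bool" where
  "k_identifiable P N S k \<longleftrightarrow>
     (\<forall>F1 F2. F1 \<subseteq> N \<and> F2 \<subseteq> N \<and> card F1 \<le> k \<and> card F2 \<le> k \<and> F1 \<inter> S \<noteq> F2 \<inter> S
        \<longrightarrow> distinguishable P F1 F2)"

definition nbr_monitors :: "'a set \<Rightarrow> ('a \<Rightarrow> 'a \<Rightarrow> bool) \<Rightarrow> 'a set \<Rightarrow> 'a set" where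
  "nbr_monitors V E M = {v \<in> V - M. \<exists>m\<in>M. E m v}"

text \<open>Auxiliary graph G*: non-monitors embedded via Some, virtual node m' = None.\<close>
definition aux_V :: "'a set \<Rightarrow> 'a set \<Rightarrow> 'a option set" where
  "aux_V V M = insert None (Some ` (V - M))"

definition aux_E :: "'a set \<Rightarrow> ('a \<Rightarrow> 'a \<Rightarrow> bool) \<Rightarrow> 'a set \<Rightarrow> 'a option \<Rightarrow> 'a option \<Rightarrow> bool" where
  "aux_E V E M x y = (case (x, y) of
      (Some a, Some b) \<Rightarrow> a \<in> V - M \<and> b \<in> V - M \<and> E a b
    | (None, Some b) \<Rightarrow> b \<in> nbr_monitors V E M
    | (Some a, None) \<Rightarrow> a \<in> nbr_monitors V E M
    | (None, None) \<Rightarrow> False)"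

definition vcut_card :: "'b set \<Rightarrow> ('b \<Rightarrow> 'b \<Rightarrow> bool) \<Rightarrow> 'b \<Rightarrow> 'b \<Rightarrow> nat" where
  "vcut_card HV HE s t =
     (if HE s t then card (HV - {t})
      else Min {card X | X. X \<subseteq> HV - {s, t} \<and> \<not> reachable (HV - X) HE s t})"

definition Gamma :: "'b set \<Rightarrow> ('b \<Rightarrow> 'b \<Rightarrow> bool) \<Rightarrow> 'b set \<Rightarrow> 'b \<Rightarrow> nat" where
  "Gamma HV HE S m = Min ((\<lambda>w. vcut_card HV HE w m) ` S)"

end

theory Submission
  imports Defs
begin

text \<open>
  Under CAP, a non-monitor v lies on a measurement path avoiding a failure set F exactly when
  v is reachable from the virtual node m' in G* - F: a walk from a monitor to v can be closed
  by walking back, and collapsing all monitors into m' turns a measurement path into a walk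
  of G*.  Consequently, adding w to a failure set Y with w \<notin> Y changes no measurement outcome
  iff Y separates w from m', so a separator of fewer than k nodes breaks k-identifiability.
  Conversely, if F1 and F2 (of size at most k) differ at w \<in> S, then F1 \<inter> F2 has fewer than
  k nodes and does not cut w off from m'; the first node of F1 \<union> F2 on a walk from m' to w
  belongs to exactly one of the two sets, and a measurement path through it that avoids the
  other set distinguishes them.
\<close>

lemma is_walk_Nil [simp]: "\<not> is_walk A E []"
  by (simp add: is_walk_def)

lemma is_walk_Cons [simp]:
  "is_walk A E (x # l) \<longleftrightarrow> x \<in> A \<and> (l = [] \<or> E x (hd l) \<and> is_walk A E l)"
  by (cases l) (auto simp: is_walk_def less_Suc_eq_0_disj)

lemma is_walk_snoc: "is_walk A E p \<Longrightarrow> E (last p) t \<Longrightarrow> t \<in> A \<Longrightarrow> is_walk A E (p @ [t])"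
  by (induction p) (auto simp: hd_append)

lemma is_walk_insert_detour:
  "is_walk A E (xs @ u # ys) \<Longrightarrow> E u t \<Longrightarrow> E t u \<Longrightarrow> t \<in> A \<Longrightarrow> is_walk A E (xs @ u # t # u # ys)"
  by (induction xs) (auto simp: hd_append)

lemma is_walk_mono: "is_walk A E p \<Longrightarrow> A \<subseteq> B \<Longrightarrow> is_walk B E p"
  by (auto simp: is_walk_def)

inductive reach :: "'b set \<Rightarrow> ('b \<Rightarrow> 'b \<Rightarrow> bool) \<Rightarrow> 'b \<Rightarrow> 'b \<Rightarrow> bool" for A E s where
  start: "s \<in> A \<Longrightarrow> reach A E s s"
| step: "reach A E s u \<Longrightarrow> E u t \<Longrightarrow> t \<in> A \<Longrightarrow> reach A E s t"

lemma reach_in: "reach A E s t \<Longrightarrow> s \<in> A \<and> t \<in> A"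
  by (induction rule: reach.induct) auto

lemma reach_prepend: "reach A E y t \<Longrightarrow> E x y \<Longrightarrow> x \<in> A \<Longrightarrow> reach A E x t"
  by (induction rule: reach.induct) (meson reach.intros)+

lemma reach_mono: "reach A E s t \<Longrightarrow> A \<subseteq> B \<Longrightarrow> reach B E s t"
  by (induction rule: reach.induct) (auto intro: reach.intros)

lemma reach_sym: "reach A E s t \<Longrightarrow> (\<And>x y. E x y \<Longrightarrow> E y x) \<Longrightarrow> reach A E t s"
  by (induction rule: reach.induct) (auto intro: reach.start reach_prepend)

lemma reach_walk: "is_walk A E (x # l) \<Longrightarrow> reach A E x (last (x # l))"
proof (induction l arbitrary: x)
  case (Cons y l)
  then have "reach A E y (last (y # l))" by simp
  then show ?case using Cons.prems reach_prepend by fastforce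
qed (simp add: reach.start)

lemma reachable_iff_reach: "reachable A E s t \<longleftrightarrow> reach A E s t"
proof
  assume "reachable A E s t"
  then obtain l where "is_walk A E (s # l)" "last (s # l) = t"
    unfolding reachable_def by (metis is_walk_def list.collapse)
  then show "reach A E s t" using reach_walk by metis
next
  assume "reach A E s t"
  then show "reachable A E s t"
  proof (induction rule: reach.induct)
    case start
    then show ?case unfolding reachable_def by (intro exI[of _ "[s]"]) (simp add: is_walk_def)
  next
    case (step u t)
    then obtain p where p: "is_walk A E p" "hd p = s" "last p = u" by (auto simp: reachable_def)
    then have "is_walk A E (p @ [t])" "hd (p @ [t]) = s"
      using step is_walk_snoc by (auto simp: hd_append)
    then show ?case unfolding reachable_def by (metis last_snoc)
  qed
qed

lemma reach_closed_walk_through: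
  assumes "reach A E s t" "\<And>x y. E x y \<Longrightarrow> E y x"
  shows "\<exists>xs ys. is_walk A E (xs @ t # ys) \<and> hd (xs @ t # ys) = s \<and> last (xs @ t # ys) = s"
  using assms(1)
proof (induction rule: reach.induct)
  case start
  then show ?case by (intro exI[of _ "[]"]) auto
next
  case (step u t)
  then obtain xs ys where w: "is_walk A E (xs @ u # ys)" "hd (xs @ u # ys) = s" "last (xs @ u # ys) = s"
    by blast
  have "is_walk A E ((xs @ [u]) @ t # u # ys)"
    using is_walk_insert_detour[OF w(1)] step assms(2) by simp
  moreover have "hd ((xs @ [u]) @ t # u # ys) = s" "last ((xs @ [u]) @ t # u # ys) = s"
    using w by (cases xs; cases ys; auto)+
  ultimately show ?case by blast
qed

lemma walk_image_reach:
  assumes "is_walk A E p" "x \<in> set p" "f ` A \<subseteq> A'"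
    and "\<And>x y. x \<in> A \<Longrightarrow> y \<in> A \<Longrightarrow> E x y \<Longrightarrow> f x = f y \<or> E' (f x) (f y)"
  shows "reach A' E' (f (hd p)) (f x)"
  using assms(1,2)
proof (induction p)
  case (Cons y l)
  have "f y \<in> A'" using Cons.prems assms(3) by auto
  show ?case
  proof (cases "x = y \<or> l = []")
    case True
    then show ?thesis using Cons.prems \<open>f y \<in> A'\<close> by (auto intro: reach.start)
  next
    case False
    then have l: "is_walk A E l" "E y (hd l)" using Cons.prems by auto
    then have "hd l \<in> A" by (cases l) auto
    then have "reach A' E' (f (hd l)) (f x)" using Cons False by simp
    moreover have "f y = f (hd l) \<or> E' (f y) (f (hd l))"
      using assms(4) l \<open>hd l \<in> A\<close> Cons.prems by simp
    ultimately show ?thesis using \<open>f y \<in> A'\<close> by (auto intro: reach_prepend)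
  qed
qed simp

lemma reach_first_hit:
  assumes "reach A E s t" "s \<notin> B"
  shows "reach (A - B) E s t \<or> (\<exists>t' \<in> B. reach (A - (B - {t'})) E s t')"
  using assms(1)
proof (induction rule: reach.induct)
  case start
  then show ?case using assms(2) by (simp add: reach.start)
next
  case (step u t)
  show ?case
  proof (cases "reach (A - B) E s u")
    case True
    then have "reach (A - (B - {t})) E s u" by (rule reach_mono) blast
    then show ?thesis using True step.hyps by (cases "t \<in> B") (auto intro: reach.step)
  qed (use step.IH in blast)
qed

lemma aux_E_sym: "undirected_graph V E \<Longrightarrow> aux_E V E M x y \<Longrightarrow> aux_E V E M y x"
  by (cases x; cases y) (auto simp: aux_E_def undirected_graph_def)

lemma aux_E_irrefl: "undirected_graph V E \<Longrightarrow> \<not> aux_E V E M x x"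
  by (cases x) (auto simp: aux_E_def undirected_graph_def)

lemma reachable_aux_iff_reach_converse:
  assumes "undirected_graph V E"
  shows "reachable A (aux_E V E M) s t \<longleftrightarrow> reach A (aux_E V E M) t s"
  using reach_sym[of A "aux_E V E M" s t] reach_sym[of A "aux_E V E M" t s] aux_E_sym[OF assms]
  unfolding reachable_iff_reach by blast

lemma reach_aux_from_virtual:
  assumes "undirected_graph V E" "M \<subseteq> V" "F \<subseteq> V - M"
    and "reach (aux_V V M - Some ` F) (aux_E V E M) None x"
  shows "x = None \<or> (\<exists>a m. x = Some a \<and> m \<in> M \<and> reach (V - F) E m a)"
  using assms(4)
proof (induction rule: reach.induct)
  case (step u t)
  show ?case
  proof (cases t)
    case (Some b)
    with step.hyps(3) have b: "b \<in> V - M" "b \<notin> F" by (auto simp: aux_V_def)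
    show ?thesis
    proof (cases u)
      case None
      with step.hyps(2) Some obtain m where "m \<in> M" "E m b"
        by (auto simp: aux_E_def nbr_monitors_def)
      moreover have "reach (V - F) E m m" using \<open>m \<in> M\<close> assms(2,3) by (auto intro: reach.start)
      ultimately show ?thesis using b Some by (blast intro: reach.step)
    next
      case (Some a)
      with step.IH obtain m where "m \<in> M" "reach (V - F) E m a" by auto
      moreover have "E a b" using step.hyps(2) Some \<open>t = Some b\<close> by (auto simp: aux_E_def)
      ultimately show ?thesis using b \<open>t = Some b\<close> by (blast intro: reach.step)
    qed
  qed simp
qed simp

lemma CAP_path_avoiding_if_reach:
  assumes "undirected_graph V E" "M \<subseteq> V" "F \<subseteq> V - M"
    and "reach (aux_V V M - Some ` F) (aux_E V E M) None (Some v)"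
  shows "\<exists>p \<in> CAP_paths V E M. v \<in> set p \<and> set p \<inter> F = {}"
proof -
  obtain m where m: "m \<in> M" "reach (V - F) E m v"
    using reach_aux_from_virtual[OF assms] by auto
  have "\<And>x y. E x y \<Longrightarrow> E y x" using assms(1) by (auto simp: undirected_graph_def)
  then obtain xs ys where w: "is_walk (V - F) E (xs @ v # ys)"
      "hd (xs @ v # ys) = m" "last (xs @ v # ys) = m"
    using reach_closed_walk_through[OF m(2)] by blast
  have "is_walk V E (xs @ v # ys)" using is_walk_mono[OF w(1)] by blast
  moreover have "set (xs @ v # ys) \<inter> F = {}" using w(1) unfolding is_walk_def by blast
  ultimately show ?thesis using w m(1) unfolding CAP_paths_def by (intro bexI[of _ "xs @ v # ys"]) auto
qed

text \<open>Collapsing all monitors into the virtual node maps every link of G to a link of G* or to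
  a single node, so measurement paths become walks of G*.\<close>
lemma reach_if_CAP_path_avoiding:
  assumes "undirected_graph V E" "p \<in> CAP_paths V E M" "set p \<inter> F = {}" "v \<in> set p" "v \<notin> M"
  shows "reach (aux_V V M - Some ` F) (aux_E V E M) None (Some v)"
proof -
  define f where "f x = (if x \<in> M then None else Some x)" for x
  have walk: "is_walk (V - F) E p" using assms(2,3) by (auto simp: CAP_paths_def is_walk_def)
  have "f ` (V - F) \<subseteq> aux_V V M - Some ` F" by (auto simp: f_def aux_V_def)
  moreover have "f x = f y \<or> aux_E V E M (f x) (f y)" if "x \<in> V - F" "y \<in> V - F" "E x y" for x y
    using that assms(1) unfolding undirected_graph_def
    by (cases "x \<in> M"; cases "y \<in> M") (auto simp: f_def aux_E_def nbr_monitors_def, blast)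
  ultimately have "reach (aux_V V M - Some ` F) (aux_E V E M) (f (hd p)) (f v)"
    by (rule walk_image_reach[OF walk assms(4)])
  then show ?thesis using assms(2,5) by (simp add: f_def CAP_paths_def)
qed

lemma CAP_path_avoiding_iff:
  assumes "undirected_graph V E" "M \<subseteq> V" "F \<subseteq> V - M" "v \<notin> M"
  shows "(\<exists>p \<in> CAP_paths V E M. v \<in> set p \<and> set p \<inter> F = {}) \<longleftrightarrow>
    reach (aux_V V M - Some ` F) (aux_E V E M) None (Some v)"
  using CAP_path_avoiding_if_reach[OF assms(1-3), of v] reach_if_CAP_path_avoiding[OF assms(1), of _ M F v]
    assms(4) by blast

lemma reach_within_pair: "reach A E s x \<Longrightarrow> A \<subseteq> {s, t} \<Longrightarrow> \<not> E s t \<Longrightarrow> \<not> E s s \<Longrightarrow> x = s"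
  by (induction rule: reach.induct) auto

lemma vcut_card_ge_iff_separators:
  assumes "finite HV" "s \<in> HV" "t \<in> HV" "s \<noteq> t" "\<not> HE s t" "\<not> HE s s"
  shows "k \<le> vcut_card HV HE s t \<longleftrightarrow>
    (\<forall>Z. Z \<subseteq> HV - {s, t} \<and> \<not> reachable (HV - Z) HE s t \<longrightarrow> k \<le> card Z)"
proof -
  let ?cards = "{card Z |Z. Z \<subseteq> HV - {s, t} \<and> \<not> reachable (HV - Z) HE s t}"
  have "?cards \<subseteq> card ` Pow HV" by blast
  then have fin: "finite ?cards" using assms(1) by (meson finite_Pow_iff finite_imageI finite_subset)
  have "HV - (HV - {s, t}) = {s, t}" using assms(2,3) by blast
  moreover have "\<not> reach {s, t} HE s t"
    using reach_within_pair[of "{s, t}" HE s t t] assms(4-6) by blast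
  ultimately have "card (HV - {s, t}) \<in> ?cards" by (auto simp: reachable_iff_reach)
  then have "?cards \<noteq> {}" by blast
  then show ?thesis
    unfolding vcut_card_def using assms(5) by (auto simp: Min_ge_iff[OF fin])
qed

definition k_connected_to_virtual :: "'a set \<Rightarrow> ('a \<Rightarrow> 'a \<Rightarrow> bool) \<Rightarrow> 'a set \<Rightarrow> nat \<Rightarrow> 'a \<Rightarrow> bool" where
  "k_connected_to_virtual V E M k w \<longleftrightarrow>
    (\<forall>X \<subseteq> V - M - {w}. card X < k \<longrightarrow> reach (aux_V V M - Some ` X) (aux_E V E M) None (Some w))"

lemma k_connected_to_virtual_if_adjacent:
  assumes "undirected_graph V E" "w \<in> V - M" "aux_E V E M (Some w) None"
  shows "k_connected_to_virtual V E M k w"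
  unfolding k_connected_to_virtual_def
proof (intro allI impI)
  fix X assume "X \<subseteq> V - M - {w}"
  then have "None \<in> aux_V V M - Some ` X" "Some w \<in> aux_V V M - Some ` X"
    using assms(2) by (auto simp: aux_V_def)
  then show "reach (aux_V V M - Some ` X) (aux_E V E M) None (Some w)"
    using aux_E_sym[OF assms(1,3)] by (blast intro: reach.intros)
qed

lemma vcut_card_ge_iff:
  assumes ug: "undirected_graph V E" and w: "w \<in> V - M" and k: "k \<le> card (V - M)"
  shows "k \<le> vcut_card (aux_V V M) (aux_E V E M) (Some w) None \<longleftrightarrow> k_connected_to_virtual V E M k w"
proof (cases "aux_E V E M (Some w) None")
  case True
  have "card (aux_V V M - {None}) = card (V - M)"
    by (subst card_image[symmetric, of Some]) (auto simp: aux_V_def intro: arg_cong[where f = card])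
  then show ?thesis using True k k_connected_to_virtual_if_adjacent[OF ug w True]
    by (simp add: vcut_card_def)
next
  case False
  let ?HV = "aux_V V M" and ?HE = "aux_E V E M"
  have "finite ?HV" using ug by (auto simp: undirected_graph_def aux_V_def)
  moreover have "Some w \<in> ?HV" "None \<in> ?HV" using w by (auto simp: aux_V_def)
  ultimately have "k \<le> vcut_card ?HV ?HE (Some w) None \<longleftrightarrow>
      (\<forall>Z. Z \<subseteq> ?HV - {Some w, None} \<and> \<not> reachable (?HV - Z) ?HE (Some w) None \<longrightarrow> k \<le> card Z)"
    using False aux_E_irrefl[OF ug, of M "Some w"] by (intro vcut_card_ge_iff_separators) simp_all
  also have "\<dots> \<longleftrightarrow> (\<forall>X \<subseteq> V - M - {w}. \<not> reach (?HV - Some ` X) ?HE None (Some w) \<longrightarrow> k \<le> card X)"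
  proof
    assume Z: "\<forall>Z. Z \<subseteq> ?HV - {Some w, None} \<and> \<not> reachable (?HV - Z) ?HE (Some w) None \<longrightarrow> k \<le> card Z"
    show "\<forall>X \<subseteq> V - M - {w}. \<not> reach (?HV - Some ` X) ?HE None (Some w) \<longrightarrow> k \<le> card X"
    proof (intro allI impI)
      fix X assume "X \<subseteq> V - M - {w}" "\<not> reach (?HV - Some ` X) ?HE None (Some w)"
      moreover have "Some ` X \<subseteq> ?HV - {Some w, None}" using \<open>X \<subseteq> V - M - {w}\<close> by (auto simp: aux_V_def)
      ultimately have "k \<le> card (Some ` X)"
        using Z[rule_format, of "Some ` X"] by (simp add: reachable_aux_iff_reach_converse[OF ug])
      then show "k \<le> card X" by (simp add: card_image)
    qed
  next
    assume X: "\<forall>X \<subseteq> V - M - {w}. \<not> reach (?HV - Some ` X) ?HE None (Some w) \<longrightarrow> k \<le> card X"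
    show "\<forall>Z. Z \<subseteq> ?HV - {Some w, None} \<and> \<not> reachable (?HV - Z) ?HE (Some w) None \<longrightarrow> k \<le> card Z"
    proof (intro allI impI)
      fix Z assume Z: "Z \<subseteq> ?HV - {Some w, None} \<and> \<not> reachable (?HV - Z) ?HE (Some w) None"
      define X' where "X' = {a. Some a \<in> Z}"
      have Z_eq: "Z = Some ` X'" and "X' \<subseteq> V - M - {w}"
        using Z by (auto simp: X'_def aux_V_def)
      moreover have "\<not> reach (?HV - Some ` X') ?HE None (Some w)"
        using Z by (simp add: Z_eq reachable_aux_iff_reach_converse[OF ug])
      ultimately have "k \<le> card X'" using X by blast
      then show "k \<le> card Z" by (simp add: Z_eq card_image)
    qed
  qed
  also have "\<dots> \<longleftrightarrow> k_connected_to_virtual V E M k w"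
    unfolding k_connected_to_virtual_def by (metis not_le)
  finally show ?thesis .
qed

lemma failed_paths_differ_if_reach:
  assumes "undirected_graph V E" "M \<subseteq> V" "F2 \<subseteq> V - M" "v \<in> F1" "v \<notin> M"
    and "reach (aux_V V M - Some ` F2) (aux_E V E M) None (Some v)"
  shows "failed_paths (CAP_paths V E M) F1 \<noteq> failed_paths (CAP_paths V E M) F2"
proof -
  obtain p where "p \<in> CAP_paths V E M" "v \<in> set p" "set p \<inter> F2 = {}"
    using CAP_path_avoiding_iff[OF assms(1-3,5)] assms(6) by blast
  then have "p \<in> failed_paths (CAP_paths V E M) F1" "p \<notin> failed_paths (CAP_paths V E M) F2"
    using assms(4) by (auto simp: failed_paths_def)
  then show ?thesis by blast
qed

lemma distinguishable_if_reach:
  assumes ug: "undirected_graph V E" and MV: "M \<subseteq> V"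
    and F: "F1 \<subseteq> V - M" "F2 \<subseteq> V - M" and w: "w \<in> F1" "w \<notin> F2"
    and reach_w: "reach (aux_V V M - Some ` (F1 \<inter> F2)) (aux_E V E M) None (Some w)"
  shows "distinguishable (CAP_paths V E M) F1 F2"
proof -
  let ?A = "aux_V V M - Some ` (F1 \<inter> F2)" and ?B = "Some ` (F1 \<union> F2)"
  have "\<not> reach (?A - ?B) (aux_E V E M) None (Some w)" using w reach_in by fast
  then obtain v where v: "v \<in> F1 \<union> F2" and
      reach_v: "reach (?A - (?B - {Some v})) (aux_E V E M) None (Some v)"
    using reach_first_hit[OF reach_w, of ?B] by blast
  then have "v \<notin> F1 \<inter> F2" "v \<notin> M" using reach_in F by fastforce+
  then consider "v \<in> F1" "v \<notin> F2" | "v \<in> F2" "v \<notin> F1" using v by blast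
  then show ?thesis
  proof cases
    case 1
    have "reach (aux_V V M - Some ` F2) (aux_E V E M) None (Some v)"
      using reach_v by (rule reach_mono) (use 1 in blast)
    then show ?thesis
      unfolding distinguishable_def by (rule failed_paths_differ_if_reach[OF ug MV F(2) 1(1) \<open>v \<notin> M\<close>])
  next
    case 2
    have "reach (aux_V V M - Some ` F1) (aux_E V E M) None (Some v)"
      using reach_v by (rule reach_mono) (use 2 in blast)
    then show ?thesis
      unfolding distinguishable_def by (rule failed_paths_differ_if_reach[OF ug MV F(1) 2(1) \<open>v \<notin> M\<close>, symmetric])
  qed
qed

lemma k_identifiable_CAP_iff:
  assumes ug: "undirected_graph V E" and MV: "M \<subseteq> V" and SN: "S \<subseteq> V - M"
  shows "k_identifiable (CAP_paths V E M) (V - M) S k \<longleftrightarrow> (\<forall>w \<in> S. k_connected_to_virtual V E M k w)"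
proof
  assume ident: "k_identifiable (CAP_paths V E M) (V - M) S k"
  show "\<forall>w \<in> S. k_connected_to_virtual V E M k w"
    unfolding k_connected_to_virtual_def
  proof (intro ballI allI impI)
    fix w X assume w: "w \<in> S" and X: "X \<subseteq> V - M - {w}" "card X < k"
    have "finite X" using finite_subset[OF X(1)] ug by (simp add: undirected_graph_def)
    then have "insert w X \<subseteq> V - M" "card (insert w X) \<le> k" "insert w X \<inter> S \<noteq> X \<inter> S"
      using w X SN by (auto simp: card_insert_if)
    moreover have "X \<subseteq> V - M" "card X \<le> k" using X by auto
    ultimately have "distinguishable (CAP_paths V E M) (insert w X) X"
      using ident unfolding k_identifiable_def by blast
    then obtain p where p: "p \<in> CAP_paths V E M" "set p \<inter> insert w X \<noteq> {}" "set p \<inter> X = {}"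
      unfolding distinguishable_def failed_paths_def by blast
    then have "w \<in> set p" by blast
    moreover have "w \<notin> M" "X \<subseteq> V - M" using w X SN by auto
    ultimately show "reach (aux_V V M - Some ` X) (aux_E V E M) None (Some w)"
      using CAP_path_avoiding_iff[OF ug MV, of X w] p by blast
  qed
next
  assume connected: "\<forall>w \<in> S. k_connected_to_virtual V E M k w"
  have dist: "distinguishable (CAP_paths V E M) F1 F2"
    if F: "F1 \<subseteq> V - M" "F2 \<subseteq> V - M" "card F1 \<le> k" "w \<in> S" "w \<in> F1" "w \<notin> F2" for F1 F2 w
  proof -
    have "finite F1" using finite_subset[OF F(1)] ug by (simp add: undirected_graph_def)
    moreover have "F1 \<inter> F2 \<subset> F1" using F(5,6) by blast
    ultimately have "card (F1 \<inter> F2) < k" using psubset_card_mono F(3) by (metis order_less_le_trans)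
    moreover have "F1 \<inter> F2 \<subseteq> V - M - {w}" using F(1,6) by blast
    ultimately have "reach (aux_V V M - Some ` (F1 \<inter> F2)) (aux_E V E M) None (Some w)"
      using connected F(4) unfolding k_connected_to_virtual_def by simp
    then show ?thesis by (rule distinguishable_if_reach[OF ug MV F(1,2,5,6)])
  qed
  show "k_identifiable (CAP_paths V E M) (V - M) S k"
    unfolding k_identifiable_def
  proof (intro allI impI, elim conjE)
    fix F1 F2 assume F: "F1 \<subseteq> V - M" "F2 \<subseteq> V - M" "card F1 \<le> k" "card F2 \<le> k" "F1 \<inter> S \<noteq> F2 \<inter> S"
    then obtain w where w: "w \<in> S" and "w \<in> F1 \<and> w \<notin> F2 \<or> w \<in> F2 \<and> w \<notin> F1" by blast
    then show "distinguishable (CAP_paths V E M) F1 F2"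
    proof (elim disjE conjE)
      assume "w \<in> F1" "w \<notin> F2"
      then show ?thesis using dist[of F1 F2 w] w F by blast
    next
      assume "w \<in> F2" "w \<notin> F1"
      then have "distinguishable (CAP_paths V E M) F2 F1" using dist[of F2 F1 w] w F by blast
      then show ?thesis unfolding distinguishable_def by (rule not_sym)
    qed
  qed
qed

theorem theorem1:
  fixes V M S :: "'a set" and E :: "'a \<Rightarrow> 'a \<Rightarrow> bool" and k :: nat
  assumes "undirected_graph V E"
    and "connected_graph V E"
    and "M \<subseteq> V"
    and "S \<subseteq> V - M" and "S \<noteq> {}"
    and "1 \<le> k" and "k \<le> card (V - M)"
  shows "k_identifiable (CAP_paths V E M) (V - M) S k \<longleftrightarrow>
         Gamma (aux_V V M) (aux_E V E M) (Some ` S) None \<ge> k"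
proof -
  have "finite S" using finite_subset[OF assms(4)] assms(1) by (simp add: undirected_graph_def)
  then have "k \<le> Gamma (aux_V V M) (aux_E V E M) (Some ` S) None \<longleftrightarrow>
      (\<forall>w \<in> S. k \<le> vcut_card (aux_V V M) (aux_E V E M) (Some w) None)"
    unfolding Gamma_def using assms(5) by (simp add: Min_ge_iff)
  also have "\<dots> \<longleftrightarrow> (\<forall>w \<in> S. k_connected_to_virtual V E M k w)"
    using vcut_card_ge_iff[OF assms(1) _ assms(7)] assms(4) by blast
  also have "\<dots> \<longleftrightarrow> k_identifiable (CAP_paths V E M) (V - M) S k"
    by (rule k_identifiable_CAP_iff[OF assms(1,3,4), symmetric])
  finally show ?thesis by (rule sym)
qed

end
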